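(* Let $n=2k$ with $k\ge1$, and let $$W(X_1,\dots,X_n)=\sum_{j=1}^nX_j+\sum_{j=1}^n\frac1{X_j}+\prod_{j=1}^nX_j+\prod_{j=1}^n\frac1{X_j}$$ on $(\mathbb{C}^* )^n$. Then every critical point of $W$ in $(\mathbb{C}^* )^n$ is non-degenerate, i.e. the Hessian matrix $(\partial^2W/\partial X_j\partial X_k)$ is invertible at every point where $\nabla W=0$.
   Context: $W$ is the superpotential $\sum_{v\in\mathrm{vert}(P)}x^v$ of the del Pezzo polytope $P^k_{dP}\subset\mathbb{R}^{2k}$. This polytope is the convex hull of $\pm e_1,\dots,\pm e_{2k}$ and $\pm(e_1+\dots+e_{2k})$, and it is the polytope associated with the del Pezzo toric variety $V_k$. *)

theory Defs
  imports "HOL-Analysis.Analysis"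
begin

definition partial_deriv :: "'n::finite \<Rightarrow> (complex^'n \<Rightarrow> complex) \<Rightarrow> complex^'n \<Rightarrow> complex" where
  "partial_deriv j f x = deriv (\<lambda>t. f (\<chi> i. if i = j then t else x $ i)) (x $ j)"

text \<open>The superpotential W of the del Pezzo polytope (vertices \<plusminus>e_j, \<plusminus>(e_1+...+e_n)).\<close>
definition dP_W :: "complex^'n::finite \<Rightarrow> complex" where
  "dP_W X = (\<Sum>j\<in>UNIV. X $ j) + (\<Sum>j\<in>UNIV. 1 / X $ j) + (\<Prod>j\<in>UNIV. X $ j) + (\<Prod>j\<in>UNIV. 1 / X $ j)"

definition hessian :: "(complex^'n::finite \<Rightarrow> complex) \<Rightarrow> complex^'n \<Rightarrow> complex^'n^'n" where
  "hessian f x = (\<chi> i j. partial_deriv i (partial_deriv j f) x)"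

end

theory Submission imports Defs begin

(* Write P = prod_j X_j, s = P + 1/P, c = P - 1/P and d_j = X_j + 1/X_j.
   1. Differentiating W in one coordinate at a time gives X_j dW/dX_j = X_j - 1/X_j + P - 1/P,
      so at a critical point X_j - 1/X_j = -c for every j, and the Hessian there is
        H_ij = (s + [i = j] d_j) / (X_i X_j),
      i.e. H = D (s J + diag d) D with D = diag(1/X_j) and J the all-ones matrix.
   2. From (a + 1/a)^2 = (a - 1/a)^2 + 4 we get d_j^2 = c^2 + 4 = s^2 for all j, and the
      evenness of n excludes d_j = 0 (that would force all X_j = +-i equal and P^2 = 1).
   3. Linear algebra: if d_j^2 = s^2 and d_j <> 0 for all j, and the index set has even
      cardinality, then s J + diag d has trivial kernel, because a kernel vector w satisfies
      w_j = -(s/d_j) S with S = sum w and s/d_j = +-1, whence S (1 + sum_j s/d_j) = 0, and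
      1 + (a sum of an even number of signs) is odd, hence nonzero. *)

definition upd :: "'a^'n::finite \<Rightarrow> 'n \<Rightarrow> 'a \<Rightarrow> 'a^'n" where
  "upd X j t = (\<chi> i. if i = j then t else X $ i)"

lemma upd_same [simp]: "upd X j t $ j = t"
  and upd_other [simp]: "i \<noteq> j \<Longrightarrow> upd X j t $ i = X $ i"
  by (auto simp: upd_def)

lemma partial_deriv_eqI:
  assumes "\<forall>\<^sub>F t in nhds (X $ j). f (upd X j t) = g t"
    and "(g has_field_derivative D) (at (X $ j))"
  shows "partial_deriv j f X = D"
proof -
  have "partial_deriv j f X = deriv g (X $ j)"
    unfolding partial_deriv_def upd_def[symmetric] by (rule deriv_cong_ev[OF assms(1) refl])
  with assms(2) show ?thesis by (simp add: DERIV_imp_deriv)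
qed

lemma sum_upd: "(\<Sum>l\<in>UNIV. g (upd X j t $ l)) = g t + (\<Sum>l\<in>-{j}. g (X $ l))"
  by (subst sum.remove[of UNIV j]) (auto simp: Compl_eq_Diff_UNIV intro!: sum.cong)

lemma prod_upd: "(\<Prod>l\<in>UNIV. g (upd X j t $ l)) = g t * (\<Prod>l\<in>-{j}. g (X $ l))"
  by (subst prod.remove[of UNIV j]) (auto simp: Compl_eq_Diff_UNIV intro!: prod.cong)

definition coord_prod :: "complex^'n::finite \<Rightarrow> complex" where
  "coord_prod X = (\<Prod>l\<in>UNIV. X $ l)"

definition prod_except :: "'n::finite \<Rightarrow> complex^'n \<Rightarrow> complex" where
  "prod_except j X = (\<Prod>l\<in>-{j}. X $ l)"

lemma coord_prod_split: "coord_prod X = X $ j * prod_except j X"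
  unfolding coord_prod_def prod_except_def
  by (subst prod.remove[of UNIV j]) (auto simp: Compl_eq_Diff_UNIV)

lemma prod_except_nonzero: "\<forall>l. X $ l \<noteq> 0 \<Longrightarrow> prod_except j X \<noteq> 0"
  by (simp add: prod_except_def)

lemma prod_except_upd_other:
  assumes "i \<noteq> j"
  shows "prod_except j (upd X i t) = t * (\<Prod>l\<in>-{j}-{i}. X $ l)"
  unfolding prod_except_def using assms
  by (subst prod.remove[of "-{j}" i]) (auto intro!: prod.cong)

lemma prod_except_upd_same: "prod_except j (upd X j t) = prod_except j X"
  unfolding prod_except_def by (intro prod.cong) auto

lemma dP_W_upd:
  "dP_W (upd X j t) = t + 1/t + t * prod_except j X + 1 / (t * prod_except j X)
     + (\<Sum>l\<in>-{j}. X $ l + 1 / X $ l)"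
  unfolding dP_W_def prod_except_def
  using sum_upd[of "\<lambda>x. x" X j t] sum_upd[of "\<lambda>x. 1/x" X j t]
    prod_upd[of "\<lambda>x. x" X j t] prod_upd[of "\<lambda>x. 1/x" X j t]
  by (simp add: sum.distrib prod_dividef)

lemma partial_deriv_dP_W:
  assumes "X $ j \<noteq> 0"
  shows "partial_deriv j dP_W X
           = 1 - 1/(X $ j)^2 + prod_except j X - 1 / (prod_except j X * (X $ j)^2)"
proof (rule partial_deriv_eqI)
  show "\<forall>\<^sub>F t in nhds (X $ j). dP_W (upd X j t) = t + 1/t + t * prod_except j X
     + 1 / (t * prod_except j X) + (\<Sum>l\<in>-{j}. X $ l + 1 / X $ l)"
    by (simp add: dP_W_upd)
  show "((\<lambda>t. t + 1/t + t * prod_except j X + 1 / (t * prod_except j X)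
     + (\<Sum>l\<in>-{j}. X $ l + 1 / X $ l)) has_field_derivative
     1 - 1/(X $ j)^2 + prod_except j X - 1 / (prod_except j X * (X $ j)^2)) (at (X $ j))"
    using assms
    by (cases "prod_except j X = 0")
       (auto intro!: derivative_eq_intros simp: field_simps power2_eq_square)
qed

text \<open>Multiplying by X_j: at a critical point every X_j - 1/X_j equals 1/P - P.\<close>
lemma critical_point_eq:
  assumes "\<forall>l. X $ l \<noteq> 0" and "partial_deriv j dP_W X = 0"
  shows "X $ j - 1 / X $ j = - (coord_prod X - 1 / coord_prod X)"
proof -
  have xj: "X $ j \<noteq> 0" and Q: "prod_except j X \<noteq> 0"
    using assms(1) prod_except_nonzero by auto
  have "X $ j * partial_deriv j dP_W X
          = X $ j - 1 / X $ j + coord_prod X - 1 / coord_prod X"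
    using xj Q by (simp add: partial_deriv_dP_W coord_prod_split[of X j]
        field_simps power2_eq_square)
  with assms(2) show ?thesis by (simp add: algebra_simps eq_diff_eq)
qed

section \<open>The Hessian of the superpotential\<close>

lemma upd_self [simp]: "upd X i (X $ i) = X"
  by (simp add: upd_def vec_eq_iff)

lemma hessian_dP_W_offdiag:
  assumes "i \<noteq> j" and "\<forall>l. X $ l \<noteq> 0"
  shows "hessian dP_W X $ i $ j = (coord_prod X + 1 / coord_prod X) / (X $ i * X $ j)"
proof -
  define R where "R = (\<Prod>l\<in>-{j}-{i}. X $ l)"
  have R: "R \<noteq> 0" and xi: "X $ i \<noteq> 0" and xj: "X $ j \<noteq> 0"
    using assms(2) by (auto simp: R_def)
  have P: "coord_prod X = X $ i * X $ j * R"
    using coord_prod_split[of X j] prod_except_upd_other[OF assms(1), of X "X $ i"]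
    by (simp add: R_def)
  have "partial_deriv i (partial_deriv j dP_W) X = R + 1 / ((X $ i)^2 * R * (X $ j)^2)"
  proof (rule partial_deriv_eqI)
    show "\<forall>\<^sub>F t in nhds (X $ i). partial_deriv j dP_W (upd X i t)
            = 1 - 1/(X $ j)^2 + t * R - 1 / (t * R * (X $ j)^2)"
      using assms xj by (simp add: partial_deriv_dP_W prod_except_upd_other R_def)
    show "((\<lambda>t. 1 - 1/(X $ j)^2 + t * R - 1 / (t * R * (X $ j)^2)) has_field_derivative
            R + 1 / ((X $ i)^2 * R * (X $ j)^2)) (at (X $ i))"
      using R xi xj by (auto intro!: derivative_eq_intros simp: field_simps power2_eq_square)
  qed
  also have "\<dots> = (coord_prod X + 1 / coord_prod X) / (X $ i * X $ j)"
    using R xi xj by (simp add: P field_simps power2_eq_square)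
  finally show ?thesis by (simp add: hessian_def)
qed

lemma hessian_dP_W_diag:
  assumes "\<forall>l. X $ l \<noteq> 0"
  shows "hessian dP_W X $ j $ j = 2 / (X $ j)^3 + 2 / (coord_prod X * (X $ j)^2)"
proof -
  define Q where "Q = prod_except j X"
  have Q: "Q \<noteq> 0" and xj: "X $ j \<noteq> 0"
    using assms prod_except_nonzero by (auto simp: Q_def)
  have "partial_deriv j (partial_deriv j dP_W) X = 2 / (X $ j)^3 + 2 / (Q * (X $ j)^3)"
  proof (rule partial_deriv_eqI)
    have "\<forall>\<^sub>F t in nhds (X $ j). t \<noteq> 0"
      using xj by (intro t1_space_nhds)
    then show "\<forall>\<^sub>F t in nhds (X $ j). partial_deriv j dP_W (upd X j t)
                 = 1 - 1/t^2 + Q - 1 / (Q * t^2)"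
      by eventually_elim (simp add: partial_deriv_dP_W prod_except_upd_same Q_def)
    show "((\<lambda>t. 1 - 1/t^2 + Q - 1 / (Q * t^2)) has_field_derivative
            2 / (X $ j)^3 + 2 / (Q * (X $ j)^3)) (at (X $ j))"
      using Q xj
      by (auto intro!: derivative_eq_intros simp: field_simps power2_eq_square power3_eq_cube)
  qed
  also have "\<dots> = 2 / (X $ j)^3 + 2 / (coord_prod X * (X $ j)^2)"
    using Q xj by (simp add: coord_prod_split[of X j] Q_def[symmetric]
        field_simps power2_eq_square power3_eq_cube)
  finally show ?thesis by (simp add: hessian_def)
qed

section \<open>Algebra at a critical point\<close>

lemma plus_recip_square: "(a::'a::field) \<noteq> 0 \<Longrightarrow> (a + 1/a)^2 = (a - 1/a)^2 + 4"
  by (simp add: field_simps power2_eq_square)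

text \<open>With d_j = X_j + 1/X_j and s = P + 1/P: both squares equal c^2 + 4 with c = P - 1/P.\<close>
lemma critical_point_d_square:
  assumes "X $ j \<noteq> 0" and "coord_prod X \<noteq> 0"
    and "X $ j - 1 / X $ j = - (coord_prod X - 1 / coord_prod X)"
  shows "(X $ j + 1 / X $ j)^2 = (coord_prod X + 1 / coord_prod X)^2"
  using plus_recip_square[OF assms(1)] plus_recip_square[OF assms(2)] assms(3)
  by (simp add: power2_commute)

text \<open>At a critical point the Hessian is (s J + diag d) rescaled by 1/X_i and 1/X_j.\<close>
lemma hessian_dP_W_critical:
  assumes "\<forall>l. X $ l \<noteq> 0"
    and "\<forall>l. X $ l - 1 / X $ l = - (coord_prod X - 1 / coord_prod X)"
  shows "hessian dP_W X $ i $ j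
           = (coord_prod X + 1 / coord_prod X + (if i = j then X $ i + 1 / X $ i else 0))
             / (X $ i * X $ j)"
proof (cases "i = j")
  case True
  define P where "P = coord_prod X"
  have xj: "X $ j \<noteq> 0" and P: "P \<noteq> 0"
    using assms(1) by (auto simp: P_def coord_prod_def)
  have crit: "P^2 * X $ j + P * (X $ j)^2 = P + X $ j"
    using assms(2)[rule_format, of j] xj P
    by (simp add: P_def[symmetric] field_simps power2_eq_square)
  have "2 / (X $ j)^3 + 2 / (P * (X $ j)^2) - (P + 1 / P + (X $ j + 1 / X $ j)) / (X $ j * X $ j)
          = ((P + X $ j) - (P^2 * X $ j + P * (X $ j)^2)) / (P * X $ j ^ 3)"
    using xj P by (simp add: field_simps power2_eq_square power3_eq_cube)
  then show ?thesis
    using True crit hessian_dP_W_diag[OF assms(1), of j] by (simp add: P_def)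
qed (simp add: hessian_dP_W_offdiag assms(1))

text \<open>Evenness of n rules out d_j = 0: otherwise X_j^2 = -1, which forces all coordinates
  to coincide, so P^2 = (X_j^2)^n = 1 and P - 1/P = 0 = 2 X_j, a contradiction.\<close>
lemma critical_point_d_nonzero:
  fixes X :: "complex^'n::finite"
  assumes "even CARD('n)" and "\<forall>l. X $ l \<noteq> 0"
    and crit: "\<forall>l. X $ l - 1 / X $ l = - (coord_prod X - 1 / coord_prod X)"
  shows "X $ i + 1 / X $ i \<noteq> 0"
proof
  assume d: "X $ i + 1 / X $ i = 0"
  define y where "y = X $ i"
  have y: "y \<noteq> 0" using assms(2) by (simp add: y_def)
  have y2: "y^2 = -1"
    using d y unfolding y_def[symmetric] by (simp add: field_simps power2_eq_square add_eq_0_iff)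
  have inv_y: "1 / y = - y" using y2 y by (simp add: field_simps power2_eq_square)
  have all_y: "X $ l = y" for l
  proof -
    have "X $ l - 1 / X $ l = 2 * y" using crit inv_y by (metis y_def mult_2 diff_minus_eq_add)
    then have "(X $ l - y)^2 = 0"
      using assms(2) y2 by (simp add: field_simps power2_eq_square)
    then show ?thesis by simp
  qed
  have "(coord_prod X)^2 = (y^2) ^ CARD('n)"
    by (simp add: coord_prod_def all_y power_mult[symmetric] mult.commute)
  then have "(coord_prod X)^2 = 1" using y2 assms(1) by simp
  then have "coord_prod X - 1 / coord_prod X = 0"
    by (cases "coord_prod X = 0") (auto simp: field_simps power2_eq_square)
  then have "y - 1 / y = 0" using crit y_def by simp
  with inv_y y show False by simp
qed

section \<open>A rank-one perturbation of a diagonal matrix\<close>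

text \<open>A sum of an even number of signs is even, hence never equals -1.\<close>
lemma sum_signs_neq_minus_one:
  fixes e :: "'i \<Rightarrow> 'a::{comm_ring_1, ring_char_0}"
  assumes "finite A" and "even (card A)" and "\<forall>i\<in>A. e i = 1 \<or> e i = -1"
  shows "(\<Sum>i\<in>A. e i) \<noteq> -1"
proof
  define k where "k = card (A \<inter> {i. e i = -1})"
  have "(\<Sum>i\<in>A. e i) = (\<Sum>i\<in>A. 1 - 2 * (if e i = -1 then 1 else 0))"
    using assms(3) by (intro sum.cong) auto
  also have "\<dots> = of_nat (card A) - 2 * of_nat k"
    using assms(1) by (simp add: sum_subtractf sum_distrib_left[symmetric] sum.If_cases k_def)
  finally have sum_eq: "(\<Sum>i\<in>A. e i) = of_nat (card A) - 2 * of_nat k" .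
  assume "(\<Sum>i\<in>A. e i) = -1"
  then have "(of_nat (card A + 1) :: 'a) = of_nat (2 * k)"
    by (simp add: sum_eq algebra_simps eq_diff_eq)
  then have "card A + 1 = 2 * k" by (simp only: of_nat_eq_iff)
  with assms(2) show False by presburger
qed

text \<open>If d_j^2 = s^2 and d_j \<noteq> 0 for all j over an index set of even size, then
  s J + diag d (J the all-ones matrix) has trivial kernel: a kernel vector w satisfies
  w_j = -(s/d_j) S with S = \<Sum> w and s/d_j = \<plusminus>1, so S (1 + \<Sum> s/d_j) = 0 forces S = 0.\<close>
lemma rank_one_plus_diagonal_kernel:
  fixes d w :: "'n::finite \<Rightarrow> 'a::field_char_0"
  assumes "even CARD('n)" and "\<forall>i. d i \<noteq> 0" and "\<forall>i. (d i)^2 = s^2"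
    and kernel: "\<forall>i. (\<Sum>j\<in>UNIV. (s + (if i = j then d i else 0)) * w j) = 0"
  shows "w = (\<lambda>i. 0)"
proof -
  define S where "S = (\<Sum>j\<in>UNIV. w j)"
  define e where "e i = s / d i" for i
  have eqs: "s * S + d i * w i = 0" for i
  proof -
    have "(\<Sum>j\<in>UNIV. (s + (if i = j then d i else 0)) * w j)
            = (\<Sum>j\<in>UNIV. s * w j + (if i = j then d i * w i else 0))"
      by (intro sum.cong) (auto simp: distrib_right)
    also have "\<dots> = s * S + d i * w i"
      by (simp add: sum.distrib sum_distrib_left S_def)
    finally show ?thesis using kernel by simp
  qed
  have w: "w i = - (e i * S)" for i
    using eqs[of i] assms(2) by (simp add: e_def field_simps add_eq_0_iff)
  have signs: "e i = 1 \<or> e i = -1" for i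
  proof -
    have "(e i)^2 = s^2 / (d i)^2" by (simp add: e_def power_divide)
    also have "\<dots> = 1" using assms(2) by (simp only: assms(3)[rule_format, of i, symmetric]) simp
    finally have "(e i)^2 = 1" .
    then show ?thesis by (simp only: power2_eq_1_iff)
  qed
  have "S = (\<Sum>i\<in>UNIV. w i)" by (simp add: S_def)
  also have "\<dots> = (\<Sum>i\<in>UNIV. - (e i * S))" by (simp add: w)
  also have "\<dots> = - (S * (\<Sum>i\<in>UNIV. e i))"
    by (simp add: sum_negf sum_distrib_left mult.commute)
  finally have "S = - (S * (\<Sum>i\<in>UNIV. e i))" .
  then have "S * (1 + (\<Sum>i\<in>UNIV. e i)) = 0"
    by (simp add: algebra_simps eq_neg_iff_add_eq_0)
  moreover have "1 + (\<Sum>i\<in>UNIV. e i) \<noteq> 0"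
    using sum_signs_neq_minus_one[of UNIV e] assms(1) signs
    by (auto simp: add_eq_0_iff)
  ultimately have "S = 0" by simp
  then show ?thesis using eqs assms(2) by (auto simp: fun_eq_iff)
qed

lemma invertible_if_rescaled_kernel_trivial:
  fixes H :: "'a::field^'n::finite^'n"
  assumes "\<forall>i j. H $ i $ j = M i j / (x i * x j)" and "\<forall>i. x i \<noteq> 0"
    and "\<forall>w. (\<forall>i. (\<Sum>j\<in>UNIV. M i j * w j) = 0) \<longrightarrow> w = (\<lambda>i. 0)"
  shows "invertible H"
  unfolding invertible_left_inverse matrix_left_invertible_ker
proof (intro allI impI)
  fix v :: "'a^'n" assume Hv: "H *v v = 0"
  define w where "w j = v $ j / x j" for j
  have "(\<Sum>j\<in>UNIV. M i j * w j) = x i * (H *v v) $ i" for i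
  proof -
    have M: "M i j = x i * x j * H $ i $ j" for j
      using assms(1,2) by (simp add: field_simps)
    show ?thesis
      unfolding matrix_vector_mult_def vec_lambda_beta sum_distrib_left
      using assms(2) by (intro sum.cong) (auto simp: M w_def)
  qed
  then have "w = (\<lambda>i. 0)" using assms(3) Hv by simp
  then show "v = 0" using assms(2) by (simp add: w_def fun_eq_iff vec_eq_iff)
qed

theorem mainTheorem6:
  fixes X :: "complex ^ 'n::finite"
  assumes "even CARD('n)"
    and "\<forall>j. X $ j \<noteq> 0"
    and "\<forall>j. partial_deriv j dP_W X = 0"
  shows "invertible (hessian dP_W X)"
proof -
  define s where "s = coord_prod X + 1 / coord_prod X"
  define d where "d i = X $ i + 1 / X $ i" for i
  have P: "coord_prod X \<noteq> 0" using assms(2) by (simp add: coord_prod_def)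
  have crit: "\<forall>l. X $ l - 1 / X $ l = - (coord_prod X - 1 / coord_prod X)"
    using critical_point_eq assms(2,3) by blast
  have d_nonzero: "\<forall>i. d i \<noteq> 0"
    using critical_point_d_nonzero[OF assms(1,2) crit] by (simp add: d_def)
  have d_square: "\<forall>i. (d i)^2 = s^2"
    unfolding d_def s_def using critical_point_d_square assms(2) P crit by blast
  show ?thesis
  proof (rule invertible_if_rescaled_kernel_trivial)
    show "\<forall>i j. hessian dP_W X $ i $ j = (s + (if i = j then d i else 0)) / (X $ i * X $ j)"
      using hessian_dP_W_critical[OF assms(2) crit] by (simp add: s_def d_def)
    show "\<forall>i. X $ i \<noteq> 0" by (rule assms(2))
    show "\<forall>w. (\<forall>i. (\<Sum>j\<in>UNIV. (s + (if i = j then d i else 0)) * w j) = 0) \<longrightarrow> w = (\<lambda>i. 0)"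
      using rank_one_plus_diagonal_kernel[OF assms(1) d_nonzero d_square] by blast
  qed
qed

end
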